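(* Let $m\ge n\ge 1$ be integers and let $$T_{m,n}(z)=\frac{(m-n) z^2 +2 (m+n) z +m-n}{(m+n) z^2 +2(m-n)z +m+n},$$ regarded as a rational map of the Riemann sphere. Let $J_{m,n}$ denote the Julia set of $T_{m,n}$. Then: (1) If $m=n$, then $J_{m,m}$ is the imaginary axis. (2) If $m>n\ge 1$, then $J_{m,n}$ is the circle $$J_{m,n}=\left\{z\in\mathbb{C}: \left|z+\frac{m^2+n^2}{m^2-n^2}\right|=\frac{2mn}{m^2-n^2}\right\}.$$
   Context: The map $T_{m,n}$ is the rational function obtained by applying Schröder's root-finding method $S_f(z)=z-\dfrac{f(z)f'(z)}{f'(z)^2-f(z)f''(z)}$ to the polynomial $f(z)=(z-1)^m(z+1)^n$ (equivalently, the affine conjugate of Schröder's method for $(z-a)^m(z-b)^n$ moving $a$ to $1$ and $b$ to $-1$). The Julia set of a rational map is the standard one from complex dynamics (the complement of the set of points where the family of iterates is normal). *)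

theory Defs
  imports "HOL-Analysis.Analysis"
begin

text \<open>The Riemann sphere is modelled as complex option: Some z is the finite
point z, None is the point at infinity. It carries the chordal metric.\<close>

definition chordal :: "complex option \<Rightarrow> complex option \<Rightarrow> real" where
  "chordal a b = (case (a, b) of
      (Some z, Some w) \<Rightarrow> 2 * cmod (z - w) / (sqrt (1 + (cmod z)^2) * sqrt (1 + (cmod w)^2))
    | (Some z, None) \<Rightarrow> 2 / sqrt (1 + (cmod z)^2)
    | (None, Some w) \<Rightarrow> 2 / sqrt (1 + (cmod w)^2)
    | (None, None) \<Rightarrow> 0)"

definition chball :: "complex option \<Rightarrow> real \<Rightarrow> complex option set" where
  "chball x r = {y. chordal x y < r}"

definition normal_family_on ::
  "(complex option \<Rightarrow> complex option) set \<Rightarrow> complex option set \<Rightarrow> bool" where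
  "normal_family_on F U \<longleftrightarrow>
     (\<forall>f. (\<forall>k. f k \<in> F) \<longrightarrow>
        (\<exists>r g. strict_mono (r :: nat \<Rightarrow> nat) \<and>
           (\<forall>x\<in>U. \<exists>\<delta>>0. chball x \<delta> \<subseteq> U \<and>
              (\<forall>\<epsilon>>0. \<exists>N. \<forall>j\<ge>N. \<forall>y\<in>chball x \<delta>.
                  chordal (f (r j) y) (g y) < \<epsilon>))))"

definition fatou_set :: "(complex option \<Rightarrow> complex option) \<Rightarrow> complex option set" where
  "fatou_set R = {x. \<exists>\<rho>>0. normal_family_on (range (\<lambda>k. R ^^ k)) (chball x \<rho>)}"

definition julia_set :: "(complex option \<Rightarrow> complex option) \<Rightarrow> complex option set" where
  "julia_set R = UNIV - fatou_set R"

text \<open>T_{m,n} as a self-map of the sphere. Numerator and denominator have no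
common root (num - den = -2n(z-1)^2 and den(1) = 4m), so poles go to infinity,
and T(infinity) = (m-n)/(m+n).\<close>

definition T_mn :: "nat \<Rightarrow> nat \<Rightarrow> complex option \<Rightarrow> complex option" where
  "T_mn m n w = (case w of
      None \<Rightarrow> Some ((of_nat m - of_nat n) / (of_nat m + of_nat n))
    | Some z \<Rightarrow>
        (let num = (of_nat m - of_nat n) * z^2 + 2 * (of_nat m + of_nat n) * z + (of_nat m - of_nat n);
             den = (of_nat m + of_nat n) * z^2 + 2 * (of_nat m - of_nat n) * z + (of_nat m + of_nat n)
         in if den = 0 then None else Some (num / den)))"

end

theory Submission
  imports Defs
begin

(*
  The Moebius map \<Phi>(z) = c (z - 1) / (z + 1) with c = -n/m sends 1 to 0 and -1 to \<infinity>,
  and conjugates T_{m,n} to squaring: \<Phi> \<circ> T = \<Phi>^2 on the sphere. Hence on the preimage of the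
  open unit disc the iterates of T converge locally uniformly to 1, and on the preimage of the
  exterior to -1; both regions lie in the Fatou set. Every neighbourhood of a point of
  \<Phi>^{-1}(unit circle) contains points whose K-th iterate is still far from 1 although all their
  iterates eventually approach 1, which no locally uniformly convergent subsequence of iterates
  allows. So the Julia set is \<Phi>^{-1} of the unit circle, i.e. the Apollonius circle
  n |z - 1| = m |z + 1|, which for m = n is the imaginary axis together with \<infinity>.
*)

section \<open>The chordal metric\<close>

definition stereographic :: "complex option \<Rightarrow> complex \<times> real" where
  "stereographic x = (case x of
      None \<Rightarrow> (0, 1)
    | Some z \<Rightarrow> (of_real (2 / (1 + (cmod z)^2)) * z, ((cmod z)^2 - 1) / (1 + (cmod z)^2)))"

lemma stereographic_dist_identity:
  fixes x y p q :: real
  defines "S \<equiv> 1 + x^2 + y^2" and "T \<equiv> 1 + p^2 + q^2"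
  shows "(2/S*x - 2/T*p)^2 + (2/S*y - 2/T*q)^2 + ((x^2+y^2-1)/S - (p^2+q^2-1)/T)^2
         = 4 * ((x-p)^2 + (y-q)^2) / (S * T)"
proof -
  have pos: "S > 0" "T > 0" unfolding S_def T_def by (simp_all add: add_pos_nonneg)
  have num: "(2*x*T - 2*p*S)^2 + (2*y*T - 2*q*S)^2 + ((x^2+y^2-1)*T - (p^2+q^2-1)*S)^2
        = 4 * ((x-p)^2 + (y-q)^2) * S * T"
    unfolding S_def T_def by algebra
  have "(2/S*x - 2/T*p)^2 + (2/S*y - 2/T*q)^2 + ((x^2+y^2-1)/S - (p^2+q^2-1)/T)^2
     = ((2*x*T - 2*p*S)^2 + (2*y*T - 2*q*S)^2 + ((x^2+y^2-1)*T - (p^2+q^2-1)*S)^2) / (S*T)^2"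
    using pos by (simp add: field_simps power2_eq_square)
  also have "\<dots> = 4 * ((x-p)^2 + (y-q)^2) / (S * T)"
    using pos unfolding num by (simp add: power2_eq_square)
  finally show ?thesis .
qed

lemma stereographic_dist_identity_north:
  fixes x y :: real
  defines "S \<equiv> 1 + x^2 + y^2"
  shows "(2/S*x)^2 + (2/S*y)^2 + ((x^2+y^2-1)/S - 1)^2 = 4 / S"
proof -
  have pos: "S > 0" unfolding S_def by (simp add: add_pos_nonneg)
  have num: "(2*x)^2 + (2*y)^2 + ((x^2+y^2-1) - S)^2 = 4 * S"
    unfolding S_def by algebra
  have "(2/S*x)^2 + (2/S*y)^2 + ((x^2+y^2-1)/S - 1)^2 = ((2*x)^2 + (2*y)^2 + ((x^2+y^2-1) - S)^2) / S^2"
    using pos by (simp add: field_simps power2_eq_square)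
  also have "\<dots> = 4 / S"
    using pos unfolding num by (simp add: power2_eq_square)
  finally show ?thesis .
qed

lemma dist_stereographic_Some_Some:
  "dist (stereographic (Some z)) (stereographic (Some w))
     = 2 * cmod (z - w) / (sqrt (1 + (cmod z)^2) * sqrt (1 + (cmod w)^2))"
proof -
  obtain x y p q where zw: "z = Complex x y" "w = Complex p q"
    by (cases z, cases w)
  have norms: "(cmod z)^2 = x^2 + y^2" "(cmod w)^2 = p^2 + q^2"
    by (simp_all add: zw cmod_power2)
  have "(dist (of_real (2 / (1 + (cmod z)^2)) * z) (of_real (2 / (1 + (cmod w)^2)) * w))^2
       + (dist (((cmod z)^2 - 1) / (1 + (cmod z)^2)) (((cmod w)^2 - 1) / (1 + (cmod w)^2)))^2
       = 4 * (cmod (z - w))^2 / ((1 + (cmod z)^2) * (1 + (cmod w)^2))"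
    unfolding norms using stereographic_dist_identity[of x y p q]
    by (simp add: zw dist_norm cmod_power2 dist_real_def add.assoc)
  then have "dist (stereographic (Some z)) (stereographic (Some w))
      = sqrt (4 * (cmod (z - w))^2 / ((1 + (cmod z)^2) * (1 + (cmod w)^2)))"
    by (simp add: stereographic_def dist_Pair_Pair)
  then show ?thesis
    by (simp add: real_sqrt_divide real_sqrt_mult)
qed

lemma dist_stereographic_Some_None:
  "dist (stereographic (Some z)) (stereographic None) = 2 / sqrt (1 + (cmod z)^2)"
proof -
  obtain x y where z: "z = Complex x y" by (cases z)
  have "(dist (of_real (2 / (1 + (cmod z)^2)) * z) 0)^2
       + (dist (((cmod z)^2 - 1) / (1 + (cmod z)^2)) 1)^2 = 4 / (1 + (cmod z)^2)"
    using stereographic_dist_identity_north[of x y]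
    by (simp add: z dist_norm cmod_power2 dist_real_def add.assoc)
  then show ?thesis
    by (simp add: stereographic_def dist_Pair_Pair real_sqrt_divide)
qed

lemma chordal_eq_dist_stereographic: "chordal x y = dist (stereographic x) (stereographic y)"
  by (cases x; cases y) (simp_all add: chordal_def dist_stereographic_Some_Some
      dist_stereographic_Some_None dist_commute[of "stereographic None"])

lemma chordal_commute: "chordal x y = chordal y x"
  by (simp add: chordal_eq_dist_stereographic dist_commute)

lemma chordal_self [simp]: "chordal x x = 0"
  by (simp add: chordal_eq_dist_stereographic)

lemma chordal_triangle: "chordal x z \<le> chordal x y + chordal y z"
  by (simp add: chordal_eq_dist_stereographic dist_triangle)

lemma chordal_Some_le: "chordal (Some z) (Some w) \<le> 2 * cmod (z - w)"
proof -
  have "1 * 1 \<le> sqrt (1 + (cmod z)^2) * sqrt (1 + (cmod w)^2)"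
    by (intro mult_mono) auto
  then show ?thesis
    by (simp add: chordal_def divide_le_eq_1 field_simps mult_le_cancel_left1)
qed

lemma chordal_None_Some_less:
  assumes "w \<noteq> 0"
  shows "chordal None (Some w) < 2 / cmod w"
proof -
  have "cmod w < sqrt (1 + (cmod w)^2)"
    by (rule real_less_rsqrt) simp
  with assms show ?thesis
    unfolding chordal_def by (simp add: frac_less2)
qed

lemma chball_subset_chball: "chball x (\<rho> - chordal x0 x) \<subseteq> chball x0 \<rho>"
proof
  fix y assume "y \<in> chball x (\<rho> - chordal x0 x)"
  then show "y \<in> chball x0 \<rho>"
    using chordal_triangle[of x0 y x] by (simp add: chball_def)
qed

lemma chball_Some_subset_ball:
  assumes "\<epsilon> > 0"
  shows "\<exists>\<delta>>0. chball (Some z0) \<delta> \<subseteq> Some ` ball z0 \<epsilon>"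
proof -
  define r0 where "r0 = sqrt (1 + (cmod z0)^2)"
  have r0: "r0 \<ge> 1" unfolding r0_def by simp
  have z0_None: "chordal (Some z0) None = 2 / r0" unfolding chordal_def r0_def by simp
  define \<delta> where "\<delta> = min (1 / r0) (\<epsilon> / r0^2)"
  have "y \<in> Some ` ball z0 \<epsilon>" if y: "chordal (Some z0) y < \<delta>" for y
  proof (cases y)
    case None
    with y z0_None r0 show ?thesis unfolding \<delta>_def by (simp add: field_simps)
  next
    case (Some z)
    define r where "r = sqrt (1 + (cmod z)^2)"
    have r: "r \<ge> 1" unfolding r_def by simp
    have z_None: "chordal (Some z) None = 2 / r" unfolding chordal_def r_def by simp
    have z0_z: "chordal (Some z0) (Some z) = 2 * cmod (z0 - z) / (r0 * r)"
      unfolding chordal_def r_def r0_def by simp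
    have "2 / r0 < 1 / r0 + 2 / r"
      using chordal_triangle[of "Some z0" None "Some z"] y Some z0_None z_None
      unfolding \<delta>_def by simp
    with r r0 have "r < 2 * r0" by (simp add: field_simps)
    have "2 * cmod (z0 - z) / (r0 * r) < \<epsilon> / r0^2"
      using y Some z0_z unfolding \<delta>_def by simp
    with r r0 have "2 * cmod (z0 - z) * r0 < \<epsilon> * r" by (simp add: field_simps power2_eq_square)
    also have "\<dots> < \<epsilon> * (2 * r0)" using \<open>r < 2 * r0\<close> assms by simp
    finally show ?thesis using Some r0 by (simp add: dist_norm)
  qed
  moreover have "\<delta> > 0" using r0 assms unfolding \<delta>_def by simp
  ultimately show ?thesis unfolding chball_def by blast
qed

lemma chball_Some_subset_open:
  assumes "open S" "z \<in> S"
  shows "\<exists>\<delta>>0. chball (Some z) \<delta> \<subseteq> Some ` S"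
proof -
  obtain \<epsilon> where "\<epsilon> > 0" "ball z \<epsilon> \<subseteq> S" using assms open_contains_ball by blast
  then show ?thesis using chball_Some_subset_ball[of \<epsilon> z] by blast
qed

lemma chball_None_subset: "\<exists>\<delta>>0. chball None \<delta> \<subseteq> insert None (Some ` {w. R < cmod w})"
proof -
  define \<delta> where "\<delta> = 2 / sqrt (1 + R^2)"
  have "R < cmod w" if "chordal None (Some w) < \<delta>" for w
  proof -
    have "2 / sqrt (1 + (cmod w)^2) < 2 / sqrt (1 + R^2)"
      using that by (simp add: \<delta>_def chordal_def)
    then have "sqrt (1 + R^2) < sqrt (1 + (cmod w)^2)"
      by (simp add: field_simps add_pos_nonneg)
    then have "\<bar>R\<bar> < cmod w"
      by (simp add: power2_less_imp_less abs_less_iff)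
    then show ?thesis by simp
  qed
  then have "chball None \<delta> \<subseteq> insert None (Some ` {w. R < cmod w})"
    unfolding chball_def by (clarsimp, metis (mono_tags) image_eqI mem_Collect_eq option.exhaust)
  moreover have "\<delta> > 0" unfolding \<delta>_def by (simp add: add_pos_nonneg)
  ultimately show ?thesis by blast
qed

lemma eventually_chordal_Some:
  assumes "(f \<longlongrightarrow> z) F" "\<delta> > 0"
  shows "eventually (\<lambda>s. chordal (Some z) (Some (f s)) < \<delta>) F"
proof -
  have "eventually (\<lambda>s. dist (f s) z < \<delta> / 2) F"
    using assms by (intro tendstoD) auto
  then show ?thesis
  proof (rule eventually_mono)
    fix s assume "dist (f s) z < \<delta> / 2"
    then show "chordal (Some z) (Some (f s)) < \<delta>"
      using chordal_Some_le[of z "f s"] by (simp add: dist_norm norm_minus_commute)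
  qed
qed

lemma eventually_chordal_None:
  assumes "filterlim f at_infinity F" "\<delta> > 0"
  shows "eventually (\<lambda>s. chordal None (Some (f s)) < \<delta>) F"
proof -
  have "eventually (\<lambda>s. 2 / \<delta> \<le> cmod (f s)) F"
    using assms filterlim_at_infinity[of 0 f F] by auto
  then show ?thesis
  proof (rule eventually_mono)
    fix s assume far: "2 / \<delta> \<le> cmod (f s)"
    then have "f s \<noteq> 0" using assms by auto
    with chordal_None_Some_less have "chordal None (Some (f s)) < 2 / cmod (f s)" .
    also have "\<dots> \<le> \<delta>" using far assms \<open>f s \<noteq> 0\<close> by (simp add: pos_divide_le_eq mult.commute)
    finally show "chordal None (Some (f s)) < \<delta>" .
  qed
qed

section \<open>Normal families of iterates\<close>

lemma filterlim_at_top_if_finite_fibres: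
  fixes idx :: "nat \<Rightarrow> nat"
  assumes "\<And>k. finite {j. idx j = k}"
  shows "filterlim idx at_top sequentially"
  unfolding filterlim_at_top
proof
  fix M
  have "{j. \<not> M \<le> idx j} = (\<Union>k<M. {j. idx j = k})" by auto
  then have "finite {j. \<not> M \<le> idx j}" using assms by auto
  then show "eventually (\<lambda>j. M \<le> idx j) sequentially"
    by (simp only: eventually_cofinite flip: cofinite_eq_sequentially)
qed

lemma normal_family_on_range_if_uniform_limit:
  fixes F :: "nat \<Rightarrow> complex option \<Rightarrow> complex option"
  assumes unif: "\<forall>\<epsilon>>0. \<exists>N. \<forall>k\<ge>N. \<forall>y\<in>U. chordal (F k y) (g y) < \<epsilon>"
    and U_open: "\<forall>x\<in>U. \<exists>\<delta>>0. chball x \<delta> \<subseteq> U"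
  shows "normal_family_on (range F) U"
  unfolding normal_family_on_def
proof (intro allI impI)
  fix f :: "nat \<Rightarrow> complex option \<Rightarrow> complex option"
  assume "\<forall>j. f j \<in> range F"
  then have "\<forall>j. \<exists>k. f j = F k" by blast
  then obtain idx where f: "f j = F (idx j)" for j by metis
  show "\<exists>(r :: nat \<Rightarrow> nat) g. strict_mono r \<and> (\<forall>x\<in>U. \<exists>\<delta>>0. chball x \<delta> \<subseteq> U \<and>
          (\<forall>\<epsilon>>0. \<exists>N. \<forall>j\<ge>N. \<forall>y\<in>chball x \<delta>. chordal (f (r j) y) (g y) < \<epsilon>))"
  proof (cases "\<exists>k. infinite {j. idx j = k}")
    case True
    then obtain k and r :: "nat \<Rightarrow> nat" where "strict_mono r" "\<forall>j. idx (r j) = k"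
      using infinite_enumerate by blast
    then have "\<forall>j y. chordal (f (r j) y) (F k y) = 0" using f by simp
    then have "\<exists>\<delta>>0. chball x \<delta> \<subseteq> U \<and>
        (\<forall>\<epsilon>>0. \<exists>N. \<forall>j\<ge>N. \<forall>y\<in>chball x \<delta>. chordal (f (r j) y) (F k y) < \<epsilon>)" if "x \<in> U" for x
      using U_open that by simp
    with \<open>strict_mono r\<close> show ?thesis by (intro exI[of _ r] exI[of _ "F k"] conjI ballI)
  next
    case False
    then have "filterlim idx at_top sequentially"
      by (intro filterlim_at_top_if_finite_fibres) auto
    have "\<exists>N. \<forall>j\<ge>N. \<forall>y\<in>U. chordal (f (id j) y) (g y) < \<epsilon>" if "\<epsilon> > 0" for \<epsilon>
    proof -
      obtain K where K: "\<forall>k\<ge>K. \<forall>y\<in>U. chordal (F k y) (g y) < \<epsilon>"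
        using unif \<open>\<epsilon> > 0\<close> by blast
      obtain N where "\<forall>j\<ge>N. K \<le> idx j"
        using \<open>filterlim idx at_top sequentially\<close>
        unfolding filterlim_at_top eventually_sequentially by blast
      then have "\<forall>j\<ge>N. \<forall>y\<in>U. chordal (f (id j) y) (g y) < \<epsilon>" using K f by simp
      then show ?thesis by blast
    qed
    then have conv: "\<exists>\<delta>>0. chball x \<delta> \<subseteq> U \<and>
        (\<forall>\<epsilon>>0. \<exists>N. \<forall>j\<ge>N. \<forall>y\<in>chball x \<delta>. chordal (f (id j) y) (g y) < \<epsilon>)" if "x \<in> U" for x
      using U_open that by (meson subsetD)
    have "strict_mono (id :: nat \<Rightarrow> nat)" by (simp add: strict_mono_def)
    with conv show ?thesis by (intro exI[of _ id] exI[of _ g] conjI ballI)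
  qed
qed

lemma in_fatou_set_if_uniform_limit:
  assumes "\<rho> > 0" and "\<forall>\<epsilon>>0. \<exists>N. \<forall>k\<ge>N. \<forall>y\<in>chball x0 \<rho>. chordal ((R^^k) y) (g y) < \<epsilon>"
  shows "x0 \<in> fatou_set R"
proof -
  have "\<exists>\<delta>>0. chball x \<delta> \<subseteq> chball x0 \<rho>" if "x \<in> chball x0 \<rho>" for x
    using that chball_subset_chball[of x \<rho> x0]
    by (intro exI[of _ "\<rho> - chordal x0 x"]) (simp add: chball_def)
  then have "normal_family_on (range (\<lambda>k. R^^k)) (chball x0 \<rho>)"
    using assms(2) by (intro normal_family_on_range_if_uniform_limit) auto
  then show ?thesis unfolding fatou_set_def using assms(1) by blast
qed

lemma normal_family_on_uniformly_Cauchy_subseq: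
  assumes "normal_family_on (range F) U" and "x0 \<in> U"
  obtains r :: "nat \<Rightarrow> nat" and \<delta> where "strict_mono r" and "\<delta> > 0"
    and "\<forall>\<epsilon>>0. \<exists>N. \<forall>i\<ge>N. \<forall>j\<ge>N. \<forall>y\<in>chball x0 \<delta>. chordal (F (r i) y) (F (r j) y) < \<epsilon>"
proof -
  obtain r :: "nat \<Rightarrow> nat" and g where r: "strict_mono r" and "\<forall>x\<in>U. \<exists>\<delta>>0. chball x \<delta> \<subseteq> U \<and>
      (\<forall>\<epsilon>>0. \<exists>N. \<forall>j\<ge>N. \<forall>y\<in>chball x \<delta>. chordal (F (r j) y) (g y) < \<epsilon>)"
    using assms(1) unfolding normal_family_on_def by blast
  then obtain \<delta> where "\<delta> > 0"
    and lim: "\<forall>\<epsilon>>0. \<exists>N. \<forall>j\<ge>N. \<forall>y\<in>chball x0 \<delta>. chordal (F (r j) y) (g y) < \<epsilon>"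
    using assms(2) by blast
  have "\<exists>N. \<forall>i\<ge>N. \<forall>j\<ge>N. \<forall>y\<in>chball x0 \<delta>. chordal (F (r i) y) (F (r j) y) < \<epsilon>"
    if "\<epsilon> > 0" for \<epsilon>
  proof -
    obtain N where N: "\<forall>j\<ge>N. \<forall>y\<in>chball x0 \<delta>. chordal (F (r j) y) (g y) < \<epsilon> / 2"
      using lim \<open>\<epsilon> > 0\<close> half_gt_zero by blast
    have "chordal (F (r i) y) (F (r j) y) < \<epsilon>" if "i \<ge> N" "j \<ge> N" "y \<in> chball x0 \<delta>" for i j y
    proof -
      have "chordal (F (r i) y) (F (r j) y) \<le> chordal (F (r i) y) (g y) + chordal (F (r j) y) (g y)"
        using chordal_triangle[of "F (r i) y" "F (r j) y" "g y"] chordal_commute[of "g y"] by simp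
      also have "\<dots> < \<epsilon>"
      proof -
        have "chordal (F (r i) y) (g y) < \<epsilon> / 2" "chordal (F (r j) y) (g y) < \<epsilon> / 2"
          using N that by simp_all
        then show ?thesis by linarith
      qed
      finally show ?thesis .
    qed
    then show ?thesis by blast
  qed
  with r \<open>\<delta> > 0\<close> that show ?thesis by blast
qed

section \<open>Apollonius circles\<close>

lemma norm_diff_1_eq_norm_add_1_iff: "cmod (z - 1) = cmod (z + 1) \<longleftrightarrow> Re z = 0"
proof -
  have "cmod (z - 1) = cmod (z + 1) \<longleftrightarrow> (cmod (z - 1))^2 = (cmod (z + 1))^2"
    by simp
  also have "\<dots> \<longleftrightarrow> Re z = 0"
    by (simp only: cmod_power2) (simp add: power2_eq_square algebra_simps)
  finally show ?thesis .
qed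

lemma apollonius_circle:
  fixes M N :: real
  assumes "0 \<le> N" and "N < M"
  shows "N * cmod (z - 1) = M * cmod (z + 1) \<longleftrightarrow>
    cmod (z + of_real ((M^2 + N^2) / (M^2 - N^2))) = 2 * M * N / (M^2 - N^2)"
proof -
  define D where "D = M^2 - N^2"
  have "D > 0" unfolding D_def using assms by (simp add: power_strict_mono)
  define x y where "x = Re z" and "y = Im z"
  have "N * cmod (z - 1) = M * cmod (z + 1) \<longleftrightarrow> (N * cmod (z - 1))^2 = (M * cmod (z + 1))^2"
    using assms by simp
  also have "\<dots> \<longleftrightarrow> N^2 * ((x - 1)^2 + y^2) = M^2 * ((x + 1)^2 + y^2)"
    by (simp add: power_mult_distrib cmod_power2 x_def y_def)
  also have "\<dots> \<longleftrightarrow> (x * D + (M^2 + N^2))^2 + (y * D)^2 = (2 * M * N)^2"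
  proof -
    have "(x * D + (M^2 + N^2))^2 + (y * D)^2 - (2 * M * N)^2
        = D * (M^2 * ((x + 1)^2 + y^2) - N^2 * ((x - 1)^2 + y^2))"
      unfolding D_def by algebra
    with \<open>D > 0\<close> show ?thesis by auto
  qed
  also have "\<dots> \<longleftrightarrow> (cmod (z + of_real ((M^2 + N^2) / D)))^2 = (2 * M * N / D)^2"
  proof -
    have "(cmod (z + of_real ((M^2 + N^2) / D)))^2 = (x + (M^2 + N^2) / D)^2 + y^2"
      by (simp add: cmod_power2 x_def y_def)
    also have "\<dots> = ((x * D + (M^2 + N^2))^2 + (y * D)^2) / D^2"
      using \<open>D > 0\<close> by (simp add: field_simps power2_eq_square)
    finally have "(x * D + (M^2 + N^2))^2 + (y * D)^2 = D^2 * (cmod (z + of_real ((M^2 + N^2) / D)))^2"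
      using \<open>D > 0\<close> by simp
    moreover have "(2 * M * N)^2 = D^2 * (2 * M * N / D)^2"
      using \<open>D > 0\<close> by (simp add: field_simps power2_eq_square)
    ultimately show ?thesis using \<open>D > 0\<close> by simp
  qed
  also have "\<dots> \<longleftrightarrow> cmod (z + of_real ((M^2 + N^2) / D)) = 2 * M * N / D"
    using assms \<open>D > 0\<close> by simp
  finally show ?thesis unfolding D_def .
qed

section \<open>Conjugating T to squaring\<close>

locale schroeder_map =
  fixes m n :: nat
  assumes n_pos: "1 \<le> n" and n_le_m: "n \<le> m"
begin

abbreviation T where "T \<equiv> T_mn m n"

definition c :: complex where "c = - (of_nat n / of_nat m)"

definition \<Phi> :: "complex option \<Rightarrow> complex option" where
  "\<Phi> x = (case x of
      None \<Rightarrow> Some c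
    | Some z \<Rightarrow> if z = -1 then None else Some (c * (z - 1) / (z + 1)))"

definition \<Phi>_inv :: "complex \<Rightarrow> complex" where
  "\<Phi>_inv w = (c + w) / (c - w)"

definition num :: "complex \<Rightarrow> complex" where
  "num z = (of_nat m - of_nat n) * z^2 + 2 * (of_nat m + of_nat n) * z + (of_nat m - of_nat n)"

definition den :: "complex \<Rightarrow> complex" where
  "den z = (of_nat m + of_nat n) * z^2 + 2 * (of_nat m - of_nat n) * z + (of_nat m + of_nat n)"

lemma norm_c: "cmod c = real n / real m"
  by (simp add: c_def norm_divide)

lemma c_nonzero: "c \<noteq> 0"
  using n_pos n_le_m by (simp add: c_def)

lemma norm_c_le_1: "cmod c \<le> 1"
  using n_le_m by (auto simp: norm_c divide_le_eq_1)

lemma \<Phi>_None [simp]: "\<Phi> None = Some c"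
  by (simp add: \<Phi>_def)

lemma \<Phi>_eq_None_iff: "\<Phi> x = None \<longleftrightarrow> x = Some (-1)"
  by (cases x) (auto simp: \<Phi>_def)

lemma \<Phi>_Some_eq_Some_iff: "\<Phi> (Some z) = Some u \<longleftrightarrow> z \<noteq> -1 \<and> u * (z + 1) = c * (z - 1)"
proof (cases "z = -1")
  case False
  then have "z + 1 \<noteq> 0" by (metis add_eq_0_iff2)
  then show ?thesis by (auto simp: \<Phi>_def field_simps)
qed (simp add: \<Phi>_def)

lemma norm_\<Phi>_Some: "\<Phi> (Some z) = Some u \<Longrightarrow> cmod u * cmod (z + 1) = cmod c * cmod (z - 1)"
  by (metis \<Phi>_Some_eq_Some_iff norm_mult)

lemma T_Some: "T (Some z) = (if den z = 0 then None else Some (num z / den z))"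
  by (simp add: T_mn_def num_def den_def Let_def)

lemma num_plus_den: "num z + den z = 2 * of_nat m * (z + 1)^2"
  by (simp add: num_def den_def algebra_simps power2_eq_square)

lemma num_minus_den: "num z - den z = - 2 * of_nat n * (z - 1)^2"
  by (simp add: num_def den_def algebra_simps power2_eq_square)

lemma num_plus_den_nonzero:
  assumes "z \<noteq> -1"
  shows "num z + den z \<noteq> 0"
proof -
  have "z + 1 \<noteq> 0" using assms by (metis add_eq_0_iff2)
  with n_pos n_le_m show ?thesis by (simp add: num_plus_den)
qed

(* For w = T z = num z / den z this is (w - 1) / (w + 1) = -(n/m) ((z - 1) / (z + 1))^2. *)
lemma c_num_den_ratio:
  assumes "z \<noteq> -1"
  shows "c * (num z - den z) / (num z + den z) = (c * (z - 1) / (z + 1))^2"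
proof -
  have "m \<noteq> 0" using n_pos n_le_m by simp
  then have "c * (num z - den z) / (num z + den z) = c * c * (z - 1)^2 / (z + 1)^2"
    unfolding num_plus_den num_minus_den c_def by (simp add: field_simps)
  then show ?thesis by (simp add: power_divide power_mult_distrib power2_eq_square)
qed

lemma \<Phi>_T_None: "\<Phi> (T None) = map_option (\<lambda>u. u^2) (\<Phi> None)"
proof -
  define M N :: complex where "M = of_nat m" and "N = of_nat n"
  have nonzero: "M \<noteq> 0" "M + N \<noteq> 0"
    using n_pos n_le_m unfolding M_def N_def by (simp_all flip: of_nat_add)
  have c_eq: "c = - N / M" unfolding c_def M_def N_def by simp
  have "(M - N) / (M + N) \<noteq> -1" "c^2 * ((M - N) / (M + N) + 1) = c * ((M - N) / (M + N) - 1)"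
    using nonzero unfolding c_eq by (simp_all add: field_simps power2_eq_square)
  then show ?thesis by (simp add: T_mn_def \<Phi>_Some_eq_Some_iff M_def N_def)
qed

lemma \<Phi>_T_Some: "\<Phi> (T (Some z)) = map_option (\<lambda>u. u^2) (\<Phi> (Some z))"
proof (cases "z = -1")
  case True
  have "den z = 4 * of_nat n" "num z = - 4 * of_nat n"
    unfolding den_def num_def True by (simp_all add: algebra_simps power2_eq_square)
  with True n_pos show ?thesis by (simp add: T_Some \<Phi>_def)
next
  case False
  note ratio = c_num_den_ratio[OF False] and sum_nonzero = num_plus_den_nonzero[OF False]
  show ?thesis
  proof (cases "den z = 0")
    case True
    with ratio sum_nonzero have "(c * (z - 1) / (z + 1))^2 = c" by simp
    with True False show ?thesis by (simp add: T_Some \<Phi>_def)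
  next
    case den_nonzero: False
    have "num z / den z + 1 = (num z + den z) / den z" "num z / den z - 1 = (num z - den z) / den z"
      using den_nonzero by (simp_all add: field_simps)
    with den_nonzero sum_nonzero have "num z / den z \<noteq> -1"
      and "c * (num z / den z - 1) / (num z / den z + 1) = c * (num z - den z) / (num z + den z)"
      by (auto simp: add_eq_0_iff2 add.commute)
    with ratio den_nonzero False show ?thesis by (simp add: T_Some \<Phi>_def)
  qed
qed

lemma \<Phi>_T: "\<Phi> (T x) = map_option (\<lambda>u. u^2) (\<Phi> x)"
  by (cases x) (simp_all only: \<Phi>_T_None \<Phi>_T_Some)

lemma \<Phi>_iterate: "\<Phi> ((T ^^ k) x) = map_option (\<lambda>u. u^(2^k)) (\<Phi> x)"
proof (induction k)
  case (Suc k)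
  then show ?case
    by (cases "\<Phi> x") (simp_all add: \<Phi>_T power_mult[symmetric] mult.commute)
qed (cases "\<Phi> x"; simp)

lemma \<Phi>_\<Phi>_inv:
  assumes "c \<noteq> w"
  shows "\<Phi> (Some (\<Phi>_inv w)) = Some w"
proof -
  have "c - w \<noteq> 0" using assms by simp
  then show ?thesis
    using c_nonzero by (auto simp: \<Phi>_inv_def \<Phi>_Some_eq_Some_iff field_simps)
qed

lemma chordal_1_le_norm_\<Phi>:
  assumes "\<Phi> w = Some v" and "cmod v \<le> cmod c / 2"
  shows "chordal w (Some 1) \<le> 8 / cmod c * cmod v"
proof (cases w)
  case None
  with assms c_nonzero show ?thesis by simp
next
  case (Some z)
  with assms have "v * (z + 1) = c * (z - 1)" by (simp add: \<Phi>_Some_eq_Some_iff)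
  then have "(z - 1) * (c - v) = 2 * v" by (simp add: algebra_simps)
  then have "cmod (z - 1) * cmod (c - v) = 2 * cmod v" by (metis norm_mult norm_numeral)
  moreover have "cmod c / 2 \<le> cmod (c - v)" using norm_triangle_ineq2[of c v] assms(2) by simp
  ultimately have "cmod (z - 1) * (cmod c / 2) \<le> 2 * cmod v"
    by (metis mult_left_mono norm_ge_zero)
  then have "2 * cmod (z - 1) \<le> 8 / cmod c * cmod v" using c_nonzero by (simp add: field_simps)
  then show ?thesis using chordal_Some_le[of z 1] Some by simp
qed

lemma chordal_minus_1_le_inverse_norm_\<Phi>:
  assumes "\<Phi> w = Some v" and "2 * cmod c \<le> cmod v"
  shows "chordal w (Some (-1)) \<le> 8 / cmod v"
proof (cases w)
  case None
  with assms c_nonzero show ?thesis by simp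
next
  case (Some z)
  with assms have "v * (z + 1) = c * (z - 1)" by (simp add: \<Phi>_Some_eq_Some_iff)
  then have "(z + 1) * (v - c) = - 2 * c" by (simp add: algebra_simps)
  then have "cmod (z + 1) * cmod (v - c) = 2 * cmod c" by (metis norm_mult norm_minus_cancel norm_numeral mult_minus_left)
  also have "\<dots> \<le> 2" using norm_c_le_1 by simp
  finally have "cmod (z + 1) * cmod (v - c) \<le> 2" .
  moreover have "cmod v / 2 \<le> cmod (v - c)" using norm_triangle_ineq2[of v c] assms(2) by simp
  ultimately have "cmod (z + 1) * (cmod v / 2) \<le> 2"
    by (metis mult_left_mono norm_ge_zero order_trans)
  moreover have "cmod v > 0" using c_nonzero by (intro order_less_le_trans[OF _ assms(2)]) simp
  ultimately have "2 * cmod (z + 1) \<le> 8 / cmod v" by (simp add: field_simps)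
  then show ?thesis using chordal_Some_le[of z "-1"] Some by simp
qed

lemma chordal_1_ge_if_norm_\<Phi>_ge:
  assumes "\<Phi> w = Some v" and "1/2 \<le> cmod v"
  shows "1/3 \<le> chordal w (Some 1)"
proof (cases w)
  case None
  then show ?thesis using sqrt2_less_2 by (simp add: chordal_def field_simps)
next
  case (Some z)
  with assms have "cmod v * cmod (z + 1) = cmod c * cmod (z - 1)" by (simp add: norm_\<Phi>_Some)
  moreover have "cmod (z + 1) / 2 \<le> cmod v * cmod (z + 1)"
    using mult_right_mono[OF assms(2), of "cmod (z + 1)"] by simp
  moreover have "cmod c * cmod (z - 1) \<le> cmod (z - 1)"
    using norm_c_le_1 by (simp add: mult_left_le_one_le)
  moreover have "2 \<le> cmod (z + 1) + cmod (z - 1)"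
    using norm_triangle_ineq4[of "z + 1" "z - 1"] by simp
  ultimately have far: "2 \<le> 3 * cmod (z - 1)" by linarith
  have "sqrt (1 + (cmod z)^2) \<le> sqrt ((1 + cmod z)^2)"
    by (intro real_sqrt_le_mono) (simp add: power2_eq_square algebra_simps)
  also have "\<dots> \<le> 2 + cmod (z - 1)" using norm_triangle_ineq2[of z 1] by simp
  also have "\<dots> \<le> 4 * cmod (z - 1)" using far by simp
  finally have "sqrt (1 + (cmod z)^2) \<le> 4 * cmod (z - 1)" .
  moreover have "sqrt 2 \<le> 3 / 2"
    by (rule real_le_lsqrt) (simp_all add: power2_eq_square)
  ultimately have "sqrt (1 + (cmod z)^2) * sqrt 2 \<le> 3 * (2 * cmod (z - 1))"
    using mult_mono[of "sqrt (1 + (cmod z)^2)" "4 * cmod (z - 1)" "sqrt 2" "3 / 2"] by simp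
  moreover have "0 < sqrt (1 + (cmod z)^2)" by (simp add: add_pos_nonneg)
  ultimately show ?thesis using Some by (simp add: chordal_def field_simps)
qed

lemma iterates_uniformly_tendsto_1:
  assumes "0 \<le> q" "q < 1" "\<epsilon> > 0"
  shows "\<exists>N. \<forall>k\<ge>N. \<forall>y u. \<Phi> y = Some u \<longrightarrow> cmod u \<le> q \<longrightarrow> chordal ((T^^k) y) (Some 1) < \<epsilon>"
proof -
  have "0 < min (cmod c / 2) (\<epsilon> * cmod c / 8)" using c_nonzero assms by simp
  then obtain N where N: "q^N < min (cmod c / 2) (\<epsilon> * cmod c / 8)"
    using real_arch_pow_inv assms by blast
  have "chordal ((T^^k) y) (Some 1) < \<epsilon>" if "k \<ge> N" "\<Phi> y = Some u" "cmod u \<le> q" for k y u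
  proof -
    have "cmod (u^(2^k)) \<le> q^(2^k)" using that by (simp add: norm_power power_mono)
    also have "\<dots> \<le> q^k" using assms by (intro power_decreasing) auto
    also have "\<dots> \<le> q^N" using assms that(1) by (intro power_decreasing) auto
    finally have small: "cmod (u^(2^k)) \<le> q^N" .
    have "chordal ((T^^k) y) (Some 1) \<le> 8 / cmod c * cmod (u^(2^k))"
      using small N that(2) by (intro chordal_1_le_norm_\<Phi>) (simp_all add: \<Phi>_iterate)
    also have "\<dots> < 8 / cmod c * (\<epsilon> * cmod c / 8)"
      using small N c_nonzero by (intro mult_strict_left_mono) auto
    finally show ?thesis using c_nonzero by simp
  qed
  then show ?thesis by blast
qed

lemma iterates_uniformly_tendsto_minus_1:
  assumes "1 < Q" "\<epsilon> > 0"
  shows "\<exists>N. \<forall>k\<ge>N. \<forall>y. (\<forall>u. \<Phi> y = Some u \<longrightarrow> Q \<le> cmod u) \<longrightarrow> chordal ((T^^k) y) (Some (-1)) < \<epsilon>"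
proof -
  obtain N where N: "max (2 * cmod c) (8 / \<epsilon>) < Q^N" using real_arch_pow assms(1) by blast
  have "chordal ((T^^k) y) (Some (-1)) < \<epsilon>"
    if "k \<ge> N" and y: "\<forall>u. \<Phi> y = Some u \<longrightarrow> Q \<le> cmod u" for k y
  proof (cases "\<Phi> y")
    case None
    then have "(T^^k) y = Some (-1)" by (simp add: \<Phi>_iterate flip: \<Phi>_eq_None_iff)
    with assms show ?thesis by simp
  next
    case (Some u)
    have "Q^N \<le> Q^k" using assms that(1) by (intro power_increasing) auto
    also have "\<dots> \<le> Q^(2^k)" using assms by (intro power_increasing) auto
    also have "\<dots> \<le> cmod (u^(2^k))" using y Some assms by (simp add: norm_power power_mono)
    finally have large: "max (2 * cmod c) (8 / \<epsilon>) < cmod (u^(2^k))" using N by simp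
    then have "chordal ((T^^k) y) (Some (-1)) \<le> 8 / cmod (u^(2^k))"
      using Some by (intro chordal_minus_1_le_inverse_norm_\<Phi>) (simp_all add: \<Phi>_iterate)
    also have "\<dots> < \<epsilon>"
      using large assms(2) by (simp add: divide_less_eq mult.commute)
    finally show ?thesis .
  qed
  then show ?thesis by blast
qed

lemma \<Phi>_Some_in_disc_iff:
  "(\<exists>u. \<Phi> (Some z) = Some u \<and> cmod u < q) \<longleftrightarrow> cmod c * cmod (z - 1) < q * cmod (z + 1)"
proof (cases "z = -1")
  case False
  then obtain u where u: "\<Phi> (Some z) = Some u" by (cases "\<Phi> (Some z)") (simp_all add: \<Phi>_eq_None_iff)
  from False have "cmod (z + 1) > 0" by (metis add_eq_0_iff2 zero_less_norm_iff)
  then have "cmod u < q \<longleftrightarrow> cmod c * cmod (z - 1) < q * cmod (z + 1)"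
    by (metis norm_\<Phi>_Some[OF u] mult_less_cancel_right_pos)
  with u show ?thesis by auto
qed (simp add: \<Phi>_def)

lemma \<Phi>_Some_outside_disc_iff:
  "(\<forall>u. \<Phi> (Some z) = Some u \<longrightarrow> Q < cmod u) \<longleftrightarrow> Q * cmod (z + 1) < cmod c * cmod (z - 1)"
proof (cases "z = -1")
  case False
  then obtain u where u: "\<Phi> (Some z) = Some u" by (cases "\<Phi> (Some z)") (simp_all add: \<Phi>_eq_None_iff)
  from False have "cmod (z + 1) > 0" by (metis add_eq_0_iff2 zero_less_norm_iff)
  then have "Q < cmod u \<longleftrightarrow> Q * cmod (z + 1) < cmod c * cmod (z - 1)"
    by (metis norm_\<Phi>_Some[OF u] mult_less_cancel_right_pos)
  with u show ?thesis by auto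
qed (simp add: \<Phi>_def c_nonzero)

lemma chball_subset_\<Phi>_disc:
  assumes "\<Phi> x0 = Some u0" and "cmod u0 < q"
  shows "\<exists>\<rho>>0. chball x0 \<rho> \<subseteq> {y. \<exists>u. \<Phi> y = Some u \<and> cmod u < q}"
proof -
  define S where "S = {z. cmod c * cmod (z - 1) < q * cmod (z + 1)}"
  have "open S" unfolding S_def by (intro open_Collect_less continuous_intros)
  have S: "Some ` S \<subseteq> {y. \<exists>u. \<Phi> y = Some u \<and> cmod u < q}"
    unfolding S_def using \<Phi>_Some_in_disc_iff by blast
  show ?thesis
  proof (cases x0)
    case (Some z0)
    with assms have "z0 \<in> S" unfolding S_def using \<Phi>_Some_in_disc_iff by blast
    then obtain \<rho> where "\<rho> > 0" "chball x0 \<rho> \<subseteq> Some ` S"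
      using chball_Some_subset_open[OF \<open>open S\<close>] Some by blast
    with S show ?thesis by blast
  next
    case None
    with assms have "cmod c < q" by simp
    then have "0 \<le> q" using norm_ge_zero[of c] by linarith
    define R where "R = (q + cmod c) / (q - cmod c)"
    obtain \<rho> where "\<rho> > 0" and \<rho>: "chball None \<rho> \<subseteq> insert None (Some ` {w. R < cmod w})"
      using chball_None_subset by blast
    have "w \<in> S" if "R < cmod w" for w
    proof -
      have "q + cmod c < (q - cmod c) * cmod w"
        using that \<open>cmod c < q\<close> mult_strict_left_mono[OF that, of "q - cmod c"] by (simp add: R_def)
      have "cmod c * cmod (w - 1) \<le> cmod c * (cmod w + 1)"
        using norm_triangle_ineq4[of w 1] by (simp add: mult_left_mono)
      also have "\<dots> < q * (cmod w - 1)"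
        using \<open>q + cmod c < (q - cmod c) * cmod w\<close> by (simp add: algebra_simps)
      also have "\<dots> \<le> q * cmod (w + 1)"
        using norm_triangle_ineq2[of w "-1"] \<open>0 \<le> q\<close> by (intro mult_left_mono) auto
      finally show ?thesis unfolding S_def by simp
    qed
    then have "insert None (Some ` {w. R < cmod w}) \<subseteq> {y. \<exists>u. \<Phi> y = Some u \<and> cmod u < q}"
      using S \<open>cmod c < q\<close> by auto
    with \<rho> \<open>\<rho> > 0\<close> None show ?thesis by blast
  qed
qed

lemma chball_subset_\<Phi>_outside_disc:
  assumes "\<forall>u. \<Phi> x0 = Some u \<longrightarrow> Q < cmod u" and "cmod c \<le> Q"
  shows "\<exists>\<rho>>0. chball x0 \<rho> \<subseteq> {y. \<forall>u. \<Phi> y = Some u \<longrightarrow> Q < cmod u}"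
proof -
  obtain z0 where z0: "x0 = Some z0" using assms by (cases x0) auto
  define S where "S = {z. Q * cmod (z + 1) < cmod c * cmod (z - 1)}"
  have "open S" unfolding S_def by (intro open_Collect_less continuous_intros)
  moreover have "z0 \<in> S" using assms z0 \<Phi>_Some_outside_disc_iff unfolding S_def by blast
  ultimately obtain \<rho> where "\<rho> > 0" "chball x0 \<rho> \<subseteq> Some ` S"
    using chball_Some_subset_open z0 by blast
  moreover have "Some ` S \<subseteq> {y. \<forall>u. \<Phi> y = Some u \<longrightarrow> Q < cmod u}"
    unfolding S_def using \<Phi>_Some_outside_disc_iff by blast
  ultimately show ?thesis by blast
qed

lemma in_fatou_set_if_norm_\<Phi>_less_1:
  assumes "\<Phi> x0 = Some u0" and "cmod u0 < 1"
  shows "x0 \<in> fatou_set T"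
proof -
  define q where "q = (cmod u0 + 1) / 2"
  have q: "cmod u0 < q" "0 \<le> q" "q < 1" using assms(2) by (auto simp: q_def)
  obtain \<rho> where "\<rho> > 0" and \<rho>: "chball x0 \<rho> \<subseteq> {y. \<exists>u. \<Phi> y = Some u \<and> cmod u < q}"
    using chball_subset_\<Phi>_disc[OF assms(1) q(1)] by blast
  have "\<exists>N. \<forall>k\<ge>N. \<forall>y\<in>chball x0 \<rho>. chordal ((T^^k) y) (Some 1) < \<epsilon>" if \<epsilon>: "\<epsilon> > 0" for \<epsilon>
  proof -
    obtain N where N: "\<forall>k\<ge>N. \<forall>y u. \<Phi> y = Some u \<longrightarrow> cmod u \<le> q \<longrightarrow> chordal ((T^^k) y) (Some 1) < \<epsilon>"
      using iterates_uniformly_tendsto_1[OF q(2,3) \<epsilon>] by blast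
    have "chordal ((T^^k) y) (Some 1) < \<epsilon>" if k: "k \<ge> N" and y: "y \<in> chball x0 \<rho>" for k y
    proof -
      obtain u where "\<Phi> y = Some u" "cmod u < q" using \<rho> y by blast
      with N k show ?thesis by simp
    qed
    then show ?thesis by blast
  qed
  with in_fatou_set_if_uniform_limit[OF \<open>\<rho> > 0\<close>, where g = "\<lambda>_. Some 1"] show ?thesis by blast
qed

lemma in_fatou_set_if_norm_\<Phi>_greater_1:
  assumes "\<forall>u. \<Phi> x0 = Some u \<longrightarrow> 1 < cmod u"
  shows "x0 \<in> fatou_set T"
proof -
  obtain Q where Q: "1 < Q" "\<forall>u. \<Phi> x0 = Some u \<longrightarrow> Q < cmod u"
  proof (cases "\<Phi> x0")
    case None
    then show ?thesis using that[of 2] by simp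
  next
    case (Some u0)
    then show ?thesis using that[of "(cmod u0 + 1) / 2"] assms by simp
  qed
  obtain \<rho> where "\<rho> > 0" and \<rho>: "chball x0 \<rho> \<subseteq> {y. \<forall>u. \<Phi> y = Some u \<longrightarrow> Q < cmod u}"
    using chball_subset_\<Phi>_outside_disc[OF Q(2)] norm_c_le_1 Q(1) by auto
  have "\<exists>N. \<forall>k\<ge>N. \<forall>y\<in>chball x0 \<rho>. chordal ((T^^k) y) (Some (-1)) < \<epsilon>" if \<epsilon>: "\<epsilon> > 0" for \<epsilon>
  proof -
    obtain N where N: "\<forall>k\<ge>N. \<forall>y. (\<forall>u. \<Phi> y = Some u \<longrightarrow> Q \<le> cmod u) \<longrightarrow>
        chordal ((T^^k) y) (Some (-1)) < \<epsilon>"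
      using iterates_uniformly_tendsto_minus_1[OF Q(1) \<epsilon>] by blast
    have "chordal ((T^^k) y) (Some (-1)) < \<epsilon>" if "k \<ge> N" "y \<in> chball x0 \<rho>" for k y
      using \<rho> that N by (fastforce simp: less_imp_le)
    then show ?thesis by blast
  qed
  with in_fatou_set_if_uniform_limit[OF \<open>\<rho> > 0\<close>, where g = "\<lambda>_. Some (-1)"] show ?thesis by blast
qed

lemma eventually_chordal_\<Phi>_inv_radial:
  assumes "\<Phi> x0 = Some u0" and "\<delta> > 0"
  shows "eventually (\<lambda>s. chordal x0 (Some (\<Phi>_inv (of_real s * u0))) < \<delta>) (at_left 1)"
proof (cases x0)
  case None
  with assms(1) have "u0 = c" by simp
  have num_lim: "((\<lambda>s. c + of_real s * c) \<longlongrightarrow> c + of_real 1 * c) (at_left 1)"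
    by (intro tendsto_intros)
  have den_lim: "filterlim (\<lambda>s. c - of_real s * c) (at 0) (at_left 1)"
  proof (rule filterlim_atI)
    have "((\<lambda>s. c - of_real s * c) \<longlongrightarrow> c - of_real 1 * c) (at_left 1)"
      by (intro tendsto_intros)
    then show "((\<lambda>s. c - of_real s * c) \<longlongrightarrow> 0) (at_left 1)" by simp
    have "eventually (\<lambda>s. s \<in> {0<..<1}) (at_left (1::real))" by (rule eventually_at_left_real) simp
    then show "eventually (\<lambda>s. c - of_real s * c \<noteq> 0) (at_left 1)"
      by (rule eventually_mono) (use c_nonzero in \<open>auto simp: algebra_simps\<close>)
  qed
  have "filterlim (\<lambda>s. \<Phi>_inv (of_real s * u0)) at_infinity (at_left 1)"
    unfolding \<Phi>_inv_def \<open>u0 = c\<close> divide_inverse using c_nonzero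
    by (intro tendsto_mult_filterlim_at_infinity[OF num_lim]
        filterlim_compose[OF filterlim_inverse_at_infinity den_lim]) simp
  with None assms(2) show ?thesis by (simp add: eventually_chordal_None)
next
  case (Some z0)
  with assms(1) have "z0 \<noteq> -1" and u0: "u0 * (z0 + 1) = c * (z0 - 1)"
    by (simp_all add: \<Phi>_Some_eq_Some_iff)
  have "c \<noteq> u0"
  proof
    assume "c = u0"
    with u0 have "c * (z0 + 1) = c * (z0 - 1)" by simp
    with c_nonzero show False by simp
  qed
  with u0 have "z0 = \<Phi>_inv (of_real 1 * u0)" by (simp add: \<Phi>_inv_def field_simps)
  moreover have "((\<lambda>s. \<Phi>_inv (of_real s * u0)) \<longlongrightarrow> \<Phi>_inv (of_real 1 * u0)) (at_left 1)"
    unfolding \<Phi>_inv_def using \<open>c \<noteq> u0\<close> by (intro tendsto_intros) auto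
  ultimately show ?thesis using Some assms(2) by (simp add: eventually_chordal_Some)
qed

lemma exists_\<Phi>_disc_point_near_circle:
  assumes "\<Phi> x0 = Some u0" and "cmod u0 = 1" and "\<delta> > 0"
  obtains y u where "chordal x0 y < \<delta>" and "\<Phi> y = Some u" and "cmod u < 1"
    and "1/2 \<le> cmod u ^ 2^K"
proof -
  let ?F = "at_left (1::real)"
  have "eventually (\<lambda>s. s \<in> {0<..<1}) ?F" by (rule eventually_at_left_real) simp
  moreover have "eventually (\<lambda>s. s \<noteq> cmod c) ?F" by (rule eventually_neq_at_within)
  moreover have "((\<lambda>s. s ^ 2^K) \<longlongrightarrow> 1 ^ 2^K) ?F" by (intro tendsto_intros)
  then have "eventually (\<lambda>s. 1/2 < s ^ 2^K) ?F" by (rule order_tendstoD) simp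
  ultimately have "eventually (\<lambda>s. s \<in> {0<..<1} \<and> s \<noteq> cmod c \<and> 1/2 < s ^ 2^K \<and>
      chordal x0 (Some (\<Phi>_inv (of_real s * u0))) < \<delta>) ?F"
    using eventually_chordal_\<Phi>_inv_radial[OF assms(1,3)] by (intro eventually_conj)
  then obtain s where s: "s \<in> {0<..<1}" "s \<noteq> cmod c" "1/2 < s ^ 2^K"
    and close: "chordal x0 (Some (\<Phi>_inv (of_real s * u0))) < \<delta>"
    using eventually_happens'[OF trivial_limit_at_left_real] by blast
  have norm_u: "cmod (of_real s * u0) = s" using s(1) assms(2) by (simp add: norm_mult)
  with s(2) have "c \<noteq> of_real s * u0" by auto
  then have "\<Phi> (Some (\<Phi>_inv (of_real s * u0))) = Some (of_real s * u0)" by (rule \<Phi>_\<Phi>_inv)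
  with close s norm_u show ?thesis by (intro that) auto
qed

lemma not_in_fatou_set_if_norm_\<Phi>_eq_1:
  assumes "\<Phi> x0 = Some u0" and "cmod u0 = 1"
  shows "x0 \<notin> fatou_set T"
proof
  assume "x0 \<in> fatou_set T"
  then obtain \<rho> where "\<rho> > 0" and normal: "normal_family_on (range (\<lambda>k. T^^k)) (chball x0 \<rho>)"
    unfolding fatou_set_def by blast
  from \<open>\<rho> > 0\<close> have "x0 \<in> chball x0 \<rho>" by (simp add: chball_def)
  then obtain r :: "nat \<Rightarrow> nat" and \<delta> where r: "strict_mono r" and "\<delta> > 0" and cauchy:
      "\<forall>\<epsilon>>0. \<exists>N. \<forall>i\<ge>N. \<forall>j\<ge>N. \<forall>y\<in>chball x0 \<delta>. chordal ((T^^r i) y) ((T^^r j) y) < \<epsilon>"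
    using normal_family_on_uniformly_Cauchy_subseq[OF normal] by blast
  obtain N where N: "\<forall>i\<ge>N. \<forall>j\<ge>N. \<forall>y\<in>chball x0 \<delta>. chordal ((T^^r i) y) ((T^^r j) y) < 1/6"
    using cauchy[rule_format, of "1/6"] by auto
  obtain y u where y: "chordal x0 y < \<delta>" "\<Phi> y = Some u" "cmod u < 1" "1/2 \<le> cmod u ^ 2^(r N)"
    using exists_\<Phi>_disc_point_near_circle[OF assms \<open>\<delta> > 0\<close>] by blast
  (* The (r N)-th iterate of y is still far from 1, yet its later iterates come
     uniformly close to 1: this contradicts the Cauchy estimate at y. *)
  have far: "1/3 \<le> chordal ((T^^r N) y) (Some 1)"
    using y(2,4) by (intro chordal_1_ge_if_norm_\<Phi>_ge[of _ "u ^ 2^(r N)"]) (simp_all add: \<Phi>_iterate norm_power)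
  obtain N' where N': "\<forall>k\<ge>N'. \<forall>y' u'. \<Phi> y' = Some u' \<longrightarrow> cmod u' \<le> cmod u \<longrightarrow>
      chordal ((T^^k) y') (Some 1) < 1/6"
    using iterates_uniformly_tendsto_1[of "cmod u" "1/6"] y(3) by auto
  define j where "j = max N N'"
  have "N' \<le> r j" using seq_suble[OF r, of j] by (simp add: j_def)
  with N' y(2) have "chordal ((T^^r j) y) (Some 1) < 1/6" by blast
  moreover have "chordal ((T^^r N) y) ((T^^r j) y) < 1/6"
    using N y(1) by (simp add: j_def chball_def)
  ultimately show False
    using far chordal_triangle[of "(T^^r N) y" "Some 1" "(T^^r j) y"] by linarith
qed

lemma julia_set_T: "julia_set T = {x. \<exists>u. \<Phi> x = Some u \<and> cmod u = 1}"
proof (intro set_eqI iffI)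
  fix x assume "x \<in> julia_set T"
  then have "x \<notin> fatou_set T" by (simp add: julia_set_def)
  then show "x \<in> {x. \<exists>u. \<Phi> x = Some u \<and> cmod u = 1}"
  proof (cases "\<Phi> x")
    case None
    with \<open>x \<notin> fatou_set T\<close> in_fatou_set_if_norm_\<Phi>_greater_1 show ?thesis by simp
  next
    case (Some u)
    with \<open>x \<notin> fatou_set T\<close> in_fatou_set_if_norm_\<Phi>_less_1 in_fatou_set_if_norm_\<Phi>_greater_1
    have "\<not> cmod u < 1" "\<not> 1 < cmod u" by auto
    with Some show ?thesis by simp
  qed
next
  fix x assume "x \<in> {x. \<exists>u. \<Phi> x = Some u \<and> cmod u = 1}"
  then show "x \<in> julia_set T"
    using not_in_fatou_set_if_norm_\<Phi>_eq_1 by (auto simp: julia_set_def)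
qed

lemma \<Phi>_Some_on_circle_iff:
  "(\<exists>u. \<Phi> (Some z) = Some u \<and> cmod u = 1) \<longleftrightarrow> real n * cmod (z - 1) = real m * cmod (z + 1)"
proof (cases "z = -1")
  case False
  then obtain u where u: "\<Phi> (Some z) = Some u" by (cases "\<Phi> (Some z)") (simp_all add: \<Phi>_eq_None_iff)
  from False have "cmod (z + 1) > 0" by (metis add_eq_0_iff2 zero_less_norm_iff)
  moreover have "m > 0" using n_pos n_le_m by simp
  ultimately have "cmod u = 1 \<longleftrightarrow> real n * cmod (z - 1) = real m * cmod (z + 1)"
    using norm_\<Phi>_Some[OF u] by (auto simp: norm_c field_simps)
  with u show ?thesis by auto
qed (use n_pos in \<open>simp add: \<Phi>_def\<close>)

lemma julia_set_T_eq_imaginary_axis: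
  assumes "m = n"
  shows "julia_set T = insert None (Some ` {z. Re z = 0})"
proof -
  have "x \<in> julia_set T \<longleftrightarrow> x \<in> insert None (Some ` {z. Re z = 0})" for x
  proof (cases x)
    case None
    have "cmod c = 1" unfolding norm_c using assms n_pos by simp
    with None show ?thesis unfolding julia_set_T by simp
  next
    case (Some z)
    have "x \<in> julia_set T \<longleftrightarrow> real n * cmod (z - 1) = real m * cmod (z + 1)"
      unfolding julia_set_T Some by (simp add: \<Phi>_Some_on_circle_iff)
    also have "\<dots> \<longleftrightarrow> Re z = 0" using assms n_pos by (simp add: norm_diff_1_eq_norm_add_1_iff)
    finally show ?thesis using Some by auto
  qed
  then show ?thesis by blast
qed

lemma julia_set_T_eq_circle:
  assumes "n < m"
  shows "julia_set T =
    Some ` {z. cmod (z + of_real ((real m ^ 2 + real n ^ 2) / (real m ^ 2 - real n ^ 2)))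
                 = 2 * real m * real n / (real m ^ 2 - real n ^ 2)}"
proof -
  have "x \<in> julia_set T \<longleftrightarrow> x \<in> Some ` {z. cmod (z + of_real ((real m ^ 2 + real n ^ 2) /
      (real m ^ 2 - real n ^ 2))) = 2 * real m * real n / (real m ^ 2 - real n ^ 2)}" for x
  proof (cases x)
    case None
    with assms show ?thesis by (simp add: julia_set_T norm_c)
  next
    case (Some z)
    have "x \<in> julia_set T \<longleftrightarrow> real n * cmod (z - 1) = real m * cmod (z + 1)"
      unfolding julia_set_T Some by (simp add: \<Phi>_Some_on_circle_iff)
    with Some assms show ?thesis by (auto simp: apollonius_circle)
  qed
  then show ?thesis by blast
qed

end

theorem theorem1:
  fixes m n :: nat
  assumes "1 \<le> n" and "n \<le> m"
  shows "(m = n \<longrightarrow> julia_set (T_mn m n) = insert None (Some ` {z. Re z = 0}))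
       \<and> (n < m \<longrightarrow> julia_set (T_mn m n) =
            Some ` {z. cmod (z + complex_of_real ((real m ^ 2 + real n ^ 2) / (real m ^ 2 - real n ^ 2)))
                       = 2 * real m * real n / (real m ^ 2 - real n ^ 2)})"
proof -
  interpret schroeder_map m n using assms by unfold_locales
  show ?thesis using julia_set_T_eq_imaginary_axis julia_set_T_eq_circle by blast
qed

end
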